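(* Let $(W_1,\rho_1)$, $(W_2,\rho_2)$ be rational $\mathfrak{sl}(2)$-modules. Then $$\dim_{\mathbb{C}}\mathrm{Hom}_{\mathfrak{sl}(2)}(W_1,W_2)\le \mathrm{length}(W_1)\cdot\mathrm{length}(W_2).$$ Therefore the category $\mathcal R$ of rational $\mathfrak{sl}(2)$-modules is $\mathrm{Hom}_{\mathbb{C}}$-finite (all Hom spaces are finite-dimensional over $\mathbb{C}$).
   Context: $\mathfrak{sl}(2)$ has basis $L_{-1}=f$, $L_0=-\tfrac12 h$, $L_1=-e$ for a Chevalley basis $e,f,h$. An $\mathfrak{sl}(2)$-module is a $\mathbb{C}[z]$-module via $z\cdot v=L_0v$; it is rational if it is, with this structure, a finite-dimensional $\mathbb{C}(z)$-vector space. $\mathcal R$ is the full subcategory of rational modules. For a rational module $W$, $\mathrm{length}(W)$ is the maximal length of a filtration of $W$ by rational $\mathfrak{sl}(2)$-submodules (submodules that are $\mathbb{C}(z)$-subspaces). *)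

theory Defs
  imports Main "HOL-Library.Function_Algebras" "HOL-Computational_Algebra.Polynomial"
begin

text \<open>An sl(2)-module is a complex vector space (the whole type 'v, with scalar
multiplication s) together with the actions of a Chevalley basis e, f, h of sl(2),
given as C-linear maps satisfying [h,e] = 2e, [h,f] = -2f, [e,f] = h.\<close>

definition sl2_module ::
  "(complex \<Rightarrow> 'v::ab_group_add \<Rightarrow> 'v) \<Rightarrow> ('v \<Rightarrow> 'v) \<Rightarrow> ('v \<Rightarrow> 'v) \<Rightarrow> ('v \<Rightarrow> 'v) \<Rightarrow> bool" where
  "sl2_module s e f h \<longleftrightarrow>
     vector_space s \<and> Vector_Spaces.linear s s e \<and> Vector_Spaces.linear s s f \<and> Vector_Spaces.linear s s h \<and>
     (\<forall>v. h (e v) - e (h v) = s 2 (e v)) \<and>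
     (\<forall>v. h (f v) - f (h v) = - s 2 (f v)) \<and>
     (\<forall>v. e (f v) - f (e v) = h v)"

text \<open>The basis L_{-1} = f, L_0 = -1/2 h, L_1 = -e; we only need L_0.\<close>

definition L0 :: "(complex \<Rightarrow> 'v \<Rightarrow> 'v) \<Rightarrow> ('v \<Rightarrow> 'v) \<Rightarrow> 'v \<Rightarrow> 'v" where
  "L0 s h v = s (- 1/2) (h v)"

definition zact :: "(complex \<Rightarrow> 'v::ab_group_add \<Rightarrow> 'v) \<Rightarrow> ('v \<Rightarrow> 'v) \<Rightarrow> complex poly \<Rightarrow> 'v \<Rightarrow> 'v" where
  "zact s h p v = (\<Sum>i\<le>degree p. s (coeff p i) ((L0 s h ^^ i) v))"

text \<open>Rational module: the C[z]-structure extends to a C(z)-vector space structure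
(every nonzero polynomial acts bijectively, so C(z) acts by p(L_0) q(L_0)^{-1}),
and V is finite-dimensional over C(z): there is a finite set S such that every
v is a C(z)-linear combination of S, i.e. q(L_0) v = sum of p_x(L_0) x (x in S)
for some nonzero polynomial q and polynomials p_x.\<close>

definition rational_sl2_module ::
  "(complex \<Rightarrow> 'v::ab_group_add \<Rightarrow> 'v) \<Rightarrow> ('v \<Rightarrow> 'v) \<Rightarrow> ('v \<Rightarrow> 'v) \<Rightarrow> ('v \<Rightarrow> 'v) \<Rightarrow> bool" where
  "rational_sl2_module s e f h \<longleftrightarrow>
     sl2_module s e f h \<and>
     (\<forall>p. p \<noteq> 0 \<longrightarrow> bij (zact s h p)) \<and>
     (\<exists>S. finite S \<and>
        (\<forall>v. \<exists>q c. q \<noteq> 0 \<and> zact s h q v = (\<Sum>x\<in>S. zact s h (c x) x)))"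

text \<open>Rational submodule: a C-subspace stable under e, f, h which is a C(z)-subspace,
i.e. also stable under the inverses of the operators q(L_0), q nonzero.\<close>

definition rational_submodule ::
  "(complex \<Rightarrow> 'v::ab_group_add \<Rightarrow> 'v) \<Rightarrow> ('v \<Rightarrow> 'v) \<Rightarrow> ('v \<Rightarrow> 'v) \<Rightarrow> ('v \<Rightarrow> 'v) \<Rightarrow> 'v set \<Rightarrow> bool" where
  "rational_submodule s e f h U \<longleftrightarrow>
     module.subspace s U \<and> e ` U \<subseteq> U \<and> f ` U \<subseteq> U \<and> h ` U \<subseteq> U \<and>
     (\<forall>q v. q \<noteq> 0 \<longrightarrow> zact s h q v \<in> U \<longrightarrow> v \<in> U)"

definition rational_length ::
  "(complex \<Rightarrow> 'v::ab_group_add \<Rightarrow> 'v) \<Rightarrow> ('v \<Rightarrow> 'v) \<Rightarrow> ('v \<Rightarrow> 'v) \<Rightarrow> ('v \<Rightarrow> 'v) \<Rightarrow> nat" where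
  "rational_length s e f h =
     (GREATEST n. \<exists>U :: nat \<Rightarrow> 'v set. U 0 = {0} \<and> U n = UNIV \<and>
        (\<forall>i<n. U i \<subset> U (Suc i)) \<and> (\<forall>i\<le>n. rational_submodule s e f h (U i)))"

definition sl2_hom ::
  "(complex \<Rightarrow> 'v::ab_group_add \<Rightarrow> 'v) \<Rightarrow> ('v \<Rightarrow> 'v) \<Rightarrow> ('v \<Rightarrow> 'v) \<Rightarrow> ('v \<Rightarrow> 'v) \<Rightarrow>
   (complex \<Rightarrow> 'w::ab_group_add \<Rightarrow> 'w) \<Rightarrow> ('w \<Rightarrow> 'w) \<Rightarrow> ('w \<Rightarrow> 'w) \<Rightarrow> ('w \<Rightarrow> 'w) \<Rightarrow>
   ('v \<Rightarrow> 'w) set" where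
  "sl2_hom s1 e1 f1 h1 s2 e2 f2 h2 =
     {\<phi>. Vector_Spaces.linear s1 s2 \<phi> \<and> \<phi> \<circ> e1 = e2 \<circ> \<phi> \<and> \<phi> \<circ> f1 = f2 \<circ> \<phi> \<and> \<phi> \<circ> h1 = h2 \<circ> \<phi>}"

definition fun_scale :: "(complex \<Rightarrow> 'w \<Rightarrow> 'w) \<Rightarrow> complex \<Rightarrow> ('v \<Rightarrow> 'w) \<Rightarrow> 'v \<Rightarrow> 'w" where
  "fun_scale s2 c \<phi> = (\<lambda>x. s2 c (\<phi> x))"

end

(*
  Over the field C(z), with z acting by L_0, a rational module W is a finite-dimensional
  vector space; its rational submodules are the C(z)-subspaces stable under e and f, and e
  is semilinear for the shift z -> z + 1. Hence rational filtrations have bounded length,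
  and every step A' < A of a longest one is a cover: no rational submodule lies strictly
  between A' and A.

  Given longest filtrations (U_i) of W1 and (V_j) of W2, the subspaces
  {phi. phi(U_i) = 0, phi(U_(i+1)) <= V_j} form a chain of length(W1) * length(W2) steps
  from Hom(W1, W2) down to 0, and each step has codimension at most one by a Schur lemma
  for covers: if phi induces an isomorphism A/A' = B/B', then T = phi^-1 psi is a
  C(z)-linear endomorphism of A/A' commuting with e. Since e is injective on rational
  quotients (by e f^n = f^n e + n (h + n - 1) f^(n-1)), a polynomial relation of T of
  minimal support has shift-invariant, hence constant, coefficients; so T has a complex
  eigenvalue mu, and psi - mu phi induces a non-injective, hence zero, map A/A' -> B/B'.
*)

theory Submission
  imports Defs "HOL-Computational_Algebra.Fraction_Field" "HOL-Computational_Algebra.Fundamental_Theorem_Algebra"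
begin

definition poly_act :: "('a::field \<Rightarrow> 'b::ab_group_add \<Rightarrow> 'b) \<Rightarrow> ('b \<Rightarrow> 'b) \<Rightarrow> 'a poly \<Rightarrow> 'b \<Rightarrow> 'b" where
  "poly_act s T p v = (\<Sum>i\<le>degree p. s (coeff p i) ((T ^^ i) v))"

locale linear_endo = vector_space s for s :: "'a::field \<Rightarrow> 'b::ab_group_add \<Rightarrow> 'b" +
  fixes T :: "'b \<Rightarrow> 'b"
  assumes linear_T: "Vector_Spaces.linear s s T"
begin

sublocale T: module_hom s s T
  using linear_T by (simp add: module_hom_iff_linear)

lemma poly_act_upto:
  assumes "degree p < N"
  shows "poly_act s T p v = (\<Sum>i<N. s (coeff p i) ((T ^^ i) v))"
  unfolding poly_act_def
  by (rule sum.mono_neutral_left) (use assms in \<open>auto simp: coeff_eq_0\<close>)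

lemma poly_act_pCons: "poly_act s T (pCons a p) v = s a v + T (poly_act s T p v)"
proof -
  have "degree (pCons a p) < Suc (Suc (degree p))"
    by (metis degree_pCons_le le_imp_less_Suc)
  then have "poly_act s T (pCons a p) v
      = (\<Sum>i<Suc (Suc (degree p)). s (coeff (pCons a p) i) ((T ^^ i) v))"
    by (rule poly_act_upto)
  also have "\<dots> = s a v + (\<Sum>i<Suc (degree p). s (coeff p i) ((T ^^ Suc i) v))"
    by (subst sum.lessThan_Suc_shift) simp
  also have "\<dots> = s a v + T (\<Sum>i<Suc (degree p). s (coeff p i) ((T ^^ i) v))"
    by (simp add: T.sum T.scale del: sum.lessThan_Suc)
  also have "\<dots> = s a v + T (poly_act s T p v)"
    by (simp only: poly_act_upto[of p "Suc (degree p)"] lessI)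
  finally show ?thesis .
qed

lemma poly_act_0 [simp]: "poly_act s T 0 v = 0"
  by (simp add: poly_act_def)

lemma poly_act_const [simp]: "poly_act s T [:c:] v = s c v"
  by (simp add: poly_act_pCons)

lemma poly_act_1 [simp]: "poly_act s T 1 v = v"
  using poly_act_const[of 1 v] by (simp add: one_pCons)

lemma poly_act_add: "poly_act s T (p + q) v = poly_act s T p v + poly_act s T q v"
proof -
  define N where "N = Suc (max (degree p) (degree q))"
  have "degree (p + q) < N" "degree p < N" "degree q < N"
    unfolding N_def using degree_add_le_max[of p q] by auto
  then show ?thesis
    by (simp only: poly_act_upto coeff_add scale_left_distrib sum.distrib)
qed

lemma poly_act_smult: "poly_act s T (smult c p) v = s c (poly_act s T p v)"
proof -
  have "degree (smult c p) < Suc (degree p)" "degree p < Suc (degree p)"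
    using degree_smult_le[of c p] by auto
  then show ?thesis by (simp only: poly_act_upto scale_sum_right coeff_smult scale_scale)
qed

lemma module_hom_poly_act: "module_hom s s (poly_act s T p)"
proof
  show "poly_act s T p (x + y) = poly_act s T p x + poly_act s T p y" for x y
    by (induction p) (simp_all add: poly_act_pCons scale_right_distrib T.add add_ac)
  show "poly_act s T p (s c x) = s c (poly_act s T p x)" for c x
    by (induction p) (simp_all add: poly_act_pCons scale_right_distrib T.scale mult.commute)
qed

lemmas poly_act_add_right = module_hom.add[OF module_hom_poly_act]
  and poly_act_scale_right = module_hom.scale[OF module_hom_poly_act]
  and poly_act_zero_right [simp] = module_hom.zero[OF module_hom_poly_act]

lemma poly_act_T: "poly_act s T p (T v) = T (poly_act s T p v)"
  by (induction p) (simp_all add: poly_act_pCons T.add T.scale)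

lemma poly_act_mult: "poly_act s T (p * q) v = poly_act s T p (poly_act s T q v)"
  by (induction p) (simp_all add: poly_act_pCons poly_act_add poly_act_smult poly_act_T)

lemma poly_act_commute: "poly_act s T p (poly_act s T q v) = poly_act s T q (poly_act s T p v)"
  by (simp only: poly_act_mult[symmetric] mult.commute)

lemma poly_act_in_subspace:
  assumes "subspace A" "T ` A \<subseteq> A" "v \<in> A"
  shows "poly_act s T p v \<in> A"
proof (induction p)
  case (pCons a p)
  then have "T (poly_act s T p v) \<in> A" using assms(2) by blast
  then show ?case
    using assms by (simp add: poly_act_pCons subspace_add subspace_scale)
qed (use assms subspace_0 in simp)

lemma poly_act_sum_monom:
  "poly_act s T (\<Sum>k\<le>N. monom (g k) k) v = (\<Sum>k\<le>N. s (g k) ((T ^^ k) v))"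
proof -
  have coeff: "coeff (\<Sum>k\<le>N. monom (g k) k) i = (if i \<le> N then g i else 0)" for i
    by (simp add: coeff_sum coeff_monom)
  then have "degree (\<Sum>k\<le>N. monom (g k) k) \<le> N"
    by (intro degree_le) simp
  then have "degree (\<Sum>k\<le>N. monom (g k) k) < Suc N" by simp
  then have "poly_act s T (\<Sum>k\<le>N. monom (g k) k) v
      = (\<Sum>i<Suc N. s (coeff (\<Sum>k\<le>N. monom (g k) k) i) ((T ^^ i) v))"
    by (rule poly_act_upto)
  also have "\<dots> = (\<Sum>k\<le>N. s (g k) ((T ^^ k) v))"
    unfolding lessThan_Suc_atMost by (rule sum.cong) (simp_all add: coeff)
  finally show ?thesis .
qed

end

lemma sum_monom_nonzero:
  "\<exists>k\<le>N. g k \<noteq> 0 \<Longrightarrow> (\<Sum>k\<le>N. monom (g k) k) \<noteq> 0"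
proof
  assume "\<exists>k\<le>N. g k \<noteq> 0" "(\<Sum>k\<le>N. monom (g k) k) = 0"
  then obtain k where "k \<le> N" "g k \<noteq> 0" "coeff (\<Sum>k\<le>N. monom (g k) k) k = 0" by auto
  then show False by (simp add: coeff_sum coeff_monom)
qed

lemma eigenvector_modulo:
  fixes s :: "complex \<Rightarrow> 'b::ab_group_add \<Rightarrow> 'b"
  assumes "linear_endo s T"
    and A: "module.subspace s A" "T ` A \<subseteq> A" and A': "module.subspace s A'"
    and P: "P \<noteq> 0" "\<forall>a\<in>A. poly_act s T P a \<in> A'"
    and a0: "a0 \<in> A" "a0 \<notin> A'"
  shows "\<exists>\<mu> a. a \<in> A \<and> a \<notin> A' \<and> T a - s \<mu> a \<in> A'"
  using P
proof (induction "degree P" arbitrary: P rule: less_induct)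
  case less
  interpret linear_endo s T by fact
  show ?case
  proof (cases "degree P = 0")
    case True
    then obtain c where "P = [:c:]" by (metis degree_eq_zeroE)
    with less.prems a0 have "c \<noteq> 0" "s c a0 \<in> A'" by auto
    then have "s (inverse c) (s c a0) \<in> A'" using A' subspace_scale by blast
    with \<open>c \<noteq> 0\<close> a0 show ?thesis by simp
  next
    case False
    then have "\<not> (\<exists>a l. a \<noteq> 0 \<and> l = 0 \<and> P = pCons a l)" by auto
    then obtain \<mu> where "poly P \<mu> = 0"
      using fundamental_theorem_of_algebra_alt by blast
    then obtain Q where PQ: "P = [:-\<mu>, 1:] * Q" by (metis dvdE poly_eq_0_iff_dvd)
    with less.prems have "Q \<noteq> 0" by auto
    have "degree P = degree [:-\<mu>, 1:] + degree Q"
      unfolding PQ by (rule degree_mult_eq) (use \<open>Q \<noteq> 0\<close> in simp_all)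
    then have "degree Q < degree P" by simp
    show ?thesis
    proof (cases "\<exists>a. a \<in> A \<and> a \<notin> A' \<and> T a - s \<mu> a \<in> A'")
      case False
      have "poly_act s T Q a \<in> A'" if "a \<in> A" for a
      proof -
        have "poly_act s T Q a \<in> A" by (rule poly_act_in_subspace[OF A that])
        moreover have "T (poly_act s T Q a) - s \<mu> (poly_act s T Q a) = poly_act s T P a"
          unfolding PQ poly_act_mult by (simp add: poly_act_pCons scale_minus_left)
        ultimately show ?thesis using False less.prems that by auto
      qed
      then show ?thesis using less.hyps[OF \<open>degree Q < degree P\<close> \<open>Q \<noteq> 0\<close>] by blast
    qed blast
  qed
qed

context finite_dimensional_vector_space
begin

lemma nontrivial_relation:
  assumes "dimension \<le> N"
  shows "\<exists>g. (\<exists>k\<le>N. g k \<noteq> 0) \<and> (\<Sum>k\<le>N. scale (g k) (u k)) = 0"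
proof (cases "inj_on u {..N}")
  case True
  have "\<not> independent (u ` {..N})"
  proof
    assume "independent (u ` {..N})"
    then have "card (u ` {..N}) \<le> dimension"
      using independent_bound_general dim_subset_UNIV le_trans by blast
    with True assms show False by (simp add: card_image)
  qed
  then have "\<exists>w. (\<exists>v\<in>u ` {..N}. w v \<noteq> 0) \<and> (\<Sum>v\<in>u ` {..N}. scale (w v) v) = 0"
    by (simp add: dependent_finite)
  then obtain w where w: "(\<exists>v\<in>u ` {..N}. w v \<noteq> 0) \<and> (\<Sum>v\<in>u ` {..N}. scale (w v) v) = 0" ..
  have "(\<exists>k\<le>N. w (u k) \<noteq> 0) \<and> (\<Sum>k\<le>N. scale (w (u k)) (u k)) = 0"
    using w by (simp add: sum.reindex[OF True] Bex_def)
  then show ?thesis by (rule exI[of _ "\<lambda>k. w (u k)"])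
next
  case False
  then obtain i j where ij: "i \<le> N" "j \<le> N" "i \<noteq> j" "u i = u j"
    unfolding inj_on_def by auto
  define g :: "nat \<Rightarrow> 'a" where "g k = (if k = i then 1 else if k = j then -1 else 0)" for k
  have "scale (g k) (u k) = (if k = i then u i else 0) - (if k = j then u j else 0)" for k
    unfolding g_def using ij by (auto simp: scale_minus_left)
  then have "(\<Sum>k\<le>N. scale (g k) (u k))
      = (\<Sum>k\<le>N. if k = i then u i else 0) - (\<Sum>k\<le>N. if k = j then u j else 0)"
    by (simp only: sum_subtractf)
  also have "\<dots> = u i - u j" using ij(1,2) by simp
  also have "\<dots> = 0" using ij(4) by simp
  finally have "(\<Sum>k\<le>N. scale (g k) (u k)) = 0" .
  moreover have "g i \<noteq> 0" by (simp add: g_def)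
  ultimately have "(\<exists>k\<le>N. g k \<noteq> 0) \<and> (\<Sum>k\<le>N. scale (g k) (u k)) = 0"
    using ij(1) by blast
  then show ?thesis by (rule exI[of _ g])
qed

lemma exists_in_span_of_predecessors:
  fixes y :: "nat \<Rightarrow> 'b"
  shows "\<exists>d. y d \<in> span (S \<union> y ` {..<d})"
proof (rule ccontr)
  assume none: "\<nexists>d. y d \<in> span (S \<union> y ` {..<d})"
  have "d \<le> dim (S \<union> y ` {..<d})" for d
  proof (induction d)
    case (Suc d)
    have "span (S \<union> y ` {..<d}) \<subset> span (S \<union> y ` {..<Suc d})"
    proof
      show "span (S \<union> y ` {..<d}) \<subseteq> span (S \<union> y ` {..<Suc d})"
        by (rule span_mono) auto
      have "y d \<in> span (S \<union> y ` {..<Suc d})" by (rule span_base) auto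
      with none show "span (S \<union> y ` {..<d}) \<noteq> span (S \<union> y ` {..<Suc d})" by blast
    qed
    then have "dim (S \<union> y ` {..<d}) < dim (S \<union> y ` {..<Suc d})" by (rule dim_psubset)
    with Suc show ?case by simp
  qed simp
  then have "Suc dimension \<le> dim (S \<union> y ` {..<Suc dimension})" .
  moreover have "dim (S \<union> y ` {..<Suc dimension}) \<le> dimension" by (rule dim_subset_UNIV)
  ultimately show False by linarith
qed

lemma annihilating_poly:
  assumes "Vector_Spaces.linear scale scale T"
  shows "\<exists>P. P \<noteq> 0 \<and> (\<forall>v. poly_act scale T P v = 0)"
proof -
  interpret linear_endo scale T
    by (rule linear_endo.intro[OF vector_space_axioms linear_endo_axioms.intro[OF assms]])
  have "\<forall>v. \<exists>P. P \<noteq> 0 \<and> poly_act scale T P v = 0"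
  proof
    fix v
    obtain g where g: "\<exists>k\<le>dimension. g k \<noteq> 0" "(\<Sum>k\<le>dimension. scale (g k) ((T ^^ k) v)) = 0"
      using nontrivial_relation[OF order_refl, of "\<lambda>k. (T ^^ k) v"] by blast
    then show "\<exists>P. P \<noteq> 0 \<and> poly_act scale T P v = 0"
      by (intro exI[of _ "\<Sum>k\<le>dimension. monom (g k) k"]) (simp add: sum_monom_nonzero poly_act_sum_monom)
  qed
  from choice[OF this] obtain P where P: "\<forall>v. P v \<noteq> 0 \<and> poly_act scale T (P v) v = 0" ..
  define Q where "Q = (\<Prod>b\<in>Basis. P b)"
  have "poly_act scale T Q b = 0" if "b \<in> Basis" for b
  proof -
    have "Q = P b * (\<Prod>c\<in>Basis - {b}. P c)"
      unfolding Q_def using finite_Basis that by (rule prod.remove)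
    then have "poly_act scale T Q b = poly_act scale T (\<Prod>c\<in>Basis - {b}. P c) (poly_act scale T (P b) b)"
      by (simp only: poly_act_mult) (rule poly_act_commute)
    then show ?thesis using P by simp
  qed
  moreover have "subspace {v. poly_act scale T Q v = 0}"
    unfolding subspace_def by (simp add: poly_act_add_right poly_act_scale_right)
  ultimately have "span Basis \<subseteq> {v. poly_act scale T Q v = 0}"
    by (intro span_minimal) auto
  moreover have "Q \<noteq> 0" unfolding Q_def using P finite_Basis by simp
  ultimately show ?thesis using span_Basis by auto
qed

end

definition spanned_by_le :: "('a::field \<Rightarrow> 'b::ab_group_add \<Rightarrow> 'b) \<Rightarrow> nat \<Rightarrow> 'b set \<Rightarrow> bool" where
  "spanned_by_le s k H \<longleftrightarrow> (\<exists>B. finite B \<and> card B \<le> k \<and> module.span s B = H)"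

context vector_space
begin

lemma spanned_by_le_zero: "spanned_by_le scale 0 {0}"
  unfolding spanned_by_le_def by (intro exI[of _ "{}"]) simp

lemma spanned_by_le_Suc:
  assumes H: "subspace H" and "H' \<subseteq> H" and "spanned_by_le scale k H'"
    and codim1: "\<And>x y. x \<in> H \<Longrightarrow> y \<in> H \<Longrightarrow> \<exists>c d. (c \<noteq> 0 \<or> d \<noteq> 0) \<and> scale c x + scale d y \<in> H'"
  shows "spanned_by_le scale (Suc k) H"
proof -
  obtain B where B: "finite B" "card B \<le> k" "span B = H'"
    using \<open>spanned_by_le scale k H'\<close> unfolding spanned_by_le_def by blast
  have "\<exists>x. span (insert x B) = H" (is "\<exists>x. ?spans x")
  proof (cases "H \<subseteq> H'")
    case True
    then show ?thesis using B \<open>H' \<subseteq> H\<close> by (intro exI[of _ 0]) (simp add: span_insert_0)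
  next
    case False
    then obtain x where x: "x \<in> H" "x \<notin> span B" using B(3) by blast
    have "y \<in> span (insert x B)" if y: "y \<in> H" for y
    proof -
      obtain c d where cd: "c \<noteq> 0 \<or> d \<noteq> 0" "scale c x + scale d y \<in> span B"
        using codim1[OF x(1) y] B(3) by blast
      have "d \<noteq> 0"
      proof
        assume "d = 0"
        with cd have "c \<noteq> 0" "scale c x \<in> span B" by auto
        with x(2) show False using span_scale[of "scale c x" B "inverse c"] by simp
      qed
      have "y = scale (inverse d) ((scale c x + scale d y) - scale c x)"
        using \<open>d \<noteq> 0\<close> by simp
      also have "\<dots> \<in> span (insert x B)"
        using cd(2) span_mono[of B "insert x B"]
        by (intro span_scale span_diff) (auto intro: span_base)
      finally show ?thesis .
    qed
    moreover have "span (insert x B) \<subseteq> H"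
      using B(3) \<open>H' \<subseteq> H\<close> x(1) span_superset[of B] by (intro span_minimal[OF _ H]) auto
    ultimately show ?thesis by blast
  qed
  then obtain x where "?spans x" ..
  moreover have "card (insert x B) \<le> Suc k"
    using B(1,2) by (simp add: card_insert_if)
  ultimately show ?thesis
    using B(1) unfolding spanned_by_le_def by blast
qed

lemma spanned_by_le_chain:
  assumes "\<And>j. j \<le> N \<Longrightarrow> subspace (H j)" and "\<And>j. j < N \<Longrightarrow> H j \<subseteq> H (Suc j)"
    and "spanned_by_le scale k (H 0)"
    and "\<And>j x y. j < N \<Longrightarrow> x \<in> H (Suc j) \<Longrightarrow> y \<in> H (Suc j) \<Longrightarrow>
           \<exists>c d. (c \<noteq> 0 \<or> d \<noteq> 0) \<and> scale c x + scale d y \<in> H j"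
  shows "spanned_by_le scale (k + N) (H N)"
  using assms
proof (induction N)
  case (Suc N)
  then have "spanned_by_le scale (k + N) (H N)" by simp
  with Suc.prems show ?case
    by (simp add: spanned_by_le_Suc[of "H (Suc N)" "H N"])
qed simp

end

type_synonym ratfun = "complex poly fract"

definition fract_shift :: "complex \<Rightarrow> ratfun \<Rightarrow> ratfun" where
  "fract_shift c r =
     (SOME r'. \<exists>p q. q \<noteq> 0 \<and> r = Fract p q \<and> r' = Fract (pcompose p [:c, 1:]) (pcompose q [:c, 1:]))"

lemma pcompose_shift_eq_0_iff [simp]: "pcompose p [:c, 1:] = 0 \<longleftrightarrow> p = (0 :: complex poly)"
  by (simp add: pcompose_eq_0_iff)

lemma fract_shift_Fract:
  assumes "q \<noteq> 0"
  shows "fract_shift c (Fract p q) = Fract (pcompose p [:c, 1:]) (pcompose q [:c, 1:])"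
proof -
  have "\<exists>p' q'. q' \<noteq> 0 \<and> Fract p q = Fract p' q' \<and>
          fract_shift c (Fract p q) = Fract (pcompose p' [:c, 1:]) (pcompose q' [:c, 1:])"
    unfolding fract_shift_def by (rule someI_ex) (use assms in blast)
  then obtain p' q' where pq: "q' \<noteq> 0" "Fract p q = Fract p' q'"
    and shift: "fract_shift c (Fract p q) = Fract (pcompose p' [:c, 1:]) (pcompose q' [:c, 1:])"
    by blast
  from pq assms have "p * q' = p' * q" by (simp add: eq_fract)
  then have "pcompose p [:c, 1:] * pcompose q' [:c, 1:] = pcompose p' [:c, 1:] * pcompose q [:c, 1:]"
    by (metis pcompose_mult)
  with shift pq(1) assms show ?thesis by (simp add: eq_fract)
qed

lemma fract_shift_0 [simp]: "fract_shift c 0 = 0"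
  by (simp add: Zero_fract_def fract_shift_Fract pcompose_1)

lemma fract_shift_1 [simp]: "fract_shift c 1 = 1"
  by (simp add: One_fract_def fract_shift_Fract pcompose_1)

lemma fract_shift_shift: "fract_shift c (fract_shift d r) = fract_shift (c + d) r"
proof (cases r)
  case (Fract p q)
  have "pcompose (pcompose x [:d, 1:]) [:c, 1:] = pcompose x [:c + d, 1:]" for x :: "complex poly"
    by (simp add: pcompose_assoc[symmetric] pcompose_pCons add.commute)
  with Fract show ?thesis by (simp add: fract_shift_Fract)
qed

lemma fract_shift_zero: "fract_shift 0 r = r"
  by (cases r) (simp add: fract_shift_Fract)

lemma shift_invariant_ratio_const:
  fixes p q :: "complex poly"
  assumes q: "q \<noteq> 0" and eq: "pcompose p [:1, 1:] * q = p * pcompose q [:1, 1:]"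
  shows "\<exists>c. p = smult c q"
proof -
  define M :: real where "M = 1 + (\<Sum>x\<in>{x. poly q x = 0}. \<bar>Re x\<bar>)"
  have roots_left: "Re x < M" if "poly q x = 0" for x
  proof -
    have "\<bar>Re x\<bar> \<le> (\<Sum>x\<in>{x. poly q x = 0}. \<bar>Re x\<bar>)"
      by (rule member_le_sum) (use that poly_roots_finite[OF q] in auto)
    then show ?thesis unfolding M_def by linarith
  qed
  have q_nonzero: "poly q (of_real M + of_nat n) \<noteq> 0" for n
    using roots_left[of "of_real M + of_nat n"] by auto
  define c where "c = poly p (of_real M) / poly q (of_real M)"
  define r where "r = p - smult c q"
  have r_step: "poly r (x + 1) * poly q x = poly r x * poly q (x + 1)" for x
  proof -
    have "poly (pcompose p [:1, 1:] * q) x = poly (p * pcompose q [:1, 1:]) x" using eq by simp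
    then show ?thesis unfolding r_def by (simp add: poly_pcompose algebra_simps)
  qed
  \<comment> \<open>\<open>r\<close> vanishes at \<open>M\<close>, hence at \<open>M + n\<close> for all \<open>n\<close>, since \<open>q\<close> has no roots there.\<close>
  have r_roots: "poly r (of_real M + of_nat n) = 0" for n
  proof (induction n)
    case 0
    show ?case using q_nonzero[of 0] unfolding r_def c_def by simp
  next
    case (Suc n)
    then show ?case
      using r_step[of "of_real M + of_nat n"] q_nonzero[of n] by (simp add: add_ac)
  qed
  have "r = 0"
  proof (rule ccontr)
    assume "r \<noteq> 0"
    then have "finite {x. poly r x = 0}" by (rule poly_roots_finite)
    moreover have "range (\<lambda>n::nat. of_real M + of_nat n :: complex) \<subseteq> {x. poly r x = 0}"
      using r_roots by auto
    moreover have "infinite (range (\<lambda>n::nat. of_real M + of_nat n :: complex))"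
      by (rule range_inj_infinite) (auto simp: inj_def)
    ultimately show False using finite_subset by blast
  qed
  then show ?thesis unfolding r_def by auto
qed

lemma fract_shift_fixed_const:
  assumes "fract_shift 1 r = r"
  shows "\<exists>c. r = Fract [:c:] 1"
proof (cases r)
  case (Fract p q)
  with assms have "pcompose p [:1, 1:] * q = p * pcompose q [:1, 1:]"
    by (simp add: fract_shift_Fract eq_fract)
  with Fract obtain c where "p = smult c q" using shift_invariant_ratio_const by blast
  with Fract show ?thesis by (auto simp: eq_fract)
qed

section \<open>Rational \<open>sl(2)\<close>-modules as vector spaces over \<open>\<complex>(z)\<close>\<close>

text \<open>From \<open>e f\<^sup>n = f\<^sup>n e + n (h + n - 1) f\<^sup>n\<^sup>-\<^sup>1\<close> in \<open>U(sl(2))\<close>, written with \<open>h = -2 L\<^sub>0\<close>.\<close>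

definition sl2_coeff :: "nat \<Rightarrow> complex poly" where
  "sl2_coeff n = [:of_nat n * (of_nat n - 1), - 2 * of_nat n:]"

lemma sl2_coeff_step: "pcompose (sl2_coeff n) [:-1, 1:] + [:0, -2:] = sl2_coeff (Suc n)"
  by (simp add: sl2_coeff_def pcompose_pCons algebra_simps)

lemma sl2_coeff_nonzero: "n > 0 \<Longrightarrow> sl2_coeff n \<noteq> 0"
  by (simp add: sl2_coeff_def)

definition rational_filtration ::
  "(complex \<Rightarrow> 'v::ab_group_add \<Rightarrow> 'v) \<Rightarrow> ('v \<Rightarrow> 'v) \<Rightarrow> ('v \<Rightarrow> 'v) \<Rightarrow> ('v \<Rightarrow> 'v) \<Rightarrow>
   nat \<Rightarrow> (nat \<Rightarrow> 'v set) \<Rightarrow> bool" where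
  "rational_filtration s e f h n U \<longleftrightarrow> U 0 = {0} \<and> U n = UNIV \<and>
     (\<forall>i<n. U i \<subset> U (Suc i)) \<and> (\<forall>i\<le>n. rational_submodule s e f h (U i))"

lemma rational_length_eq_Greatest:
  "rational_length s e f h = (GREATEST n. \<exists>U. rational_filtration s e f h n U)"
  unfolding rational_length_def rational_filtration_def ..

locale rational_module =
  fixes s :: "complex \<Rightarrow> 'v::ab_group_add \<Rightarrow> 'v" and e f h :: "'v \<Rightarrow> 'v"
  assumes rational: "rational_sl2_module s e f h"
begin

lemma sl2: "sl2_module s e f h"
  using rational by (simp add: rational_sl2_module_def)

sublocale vector_space s
  using sl2 by (simp add: sl2_module_def)

sublocale E: module_hom s s e
  using sl2 by (simp add: sl2_module_def module_hom_iff_linear)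

sublocale F: module_hom s s f
  using sl2 by (simp add: sl2_module_def module_hom_iff_linear)

sublocale H: module_hom s s h
  using sl2 by (simp add: sl2_module_def module_hom_iff_linear)

lemma h_e_commutator: "h (e v) - e (h v) = s 2 (e v)"
  and h_f_commutator: "h (f v) - f (h v) = - s 2 (f v)"
  and e_f_commutator: "e (f v) - f (e v) = h v"
  using sl2 by (simp_all add: sl2_module_def)

abbreviation L :: "'v \<Rightarrow> 'v" where
  "L \<equiv> L0 s h"

sublocale L: linear_endo s L
  by (rule linear_endo.intro[OF vector_space_axioms linear_endo_axioms.intro])
    (simp add: Vector_Spaces.linear_iff vector_space_axioms L0_def H.add H.scale
      scale_right_distrib mult.commute)

abbreviation Z :: "complex poly \<Rightarrow> 'v \<Rightarrow> 'v" where
  "Z \<equiv> poly_act s L"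

lemma zact_eq: "zact s h = Z"
  by (simp add: fun_eq_iff zact_def poly_act_def)

lemma h_eq: "h v = s (-2) (L v)"
  by (simp add: L0_def)

lemma h_eq_Z: "h v = Z [:0, -2:] v"
  by (simp add: L.poly_act_pCons h_eq L.T.scale L.T.neg)

lemma e_L: "e (L v) = L (e v) + e v"
proof -
  have "e (h v) = h (e v) - s 2 (e v)"
    using h_e_commutator[of v] by (simp add: algebra_simps)
  then have "e (L v) = s (- 1/2) (h (e v) - s 2 (e v))"
    by (simp add: L0_def E.scale E.neg)
  also have "\<dots> = L (e v) + e v"
    by (simp add: L0_def scale_right_diff_distrib)
  finally show ?thesis .
qed

lemma f_L: "f (L v) = L (f v) - f v"
proof -
  have "f (h v) = h (f v) + s 2 (f v)"
    using h_f_commutator[of v] by (simp add: algebra_simps)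
  then have "f (L v) = s (- 1/2) (h (f v) + s 2 (f v))"
    by (simp add: L0_def F.scale F.neg)
  also have "\<dots> = L (f v) - f v"
    by (simp add: L0_def scale_right_distrib)
  finally show ?thesis .
qed

lemma e_Z: "e (Z p v) = Z (pcompose p [:1, 1:]) (e v)"
proof (induction p)
  case (pCons a p)
  have "e (Z (pCons a p) v) = s a (e v) + Z [:1, 1:] (Z (pcompose p [:1, 1:]) (e v))"
    by (simp add: L.poly_act_pCons E.add E.scale e_L pCons.IH add.commute)
  then show ?case
    by (simp only: pcompose_pCons L.poly_act_add L.poly_act_mult L.poly_act_const)
qed simp

lemma f_Z: "f (Z p v) = Z (pcompose p [:-1, 1:]) (f v)"
proof (induction p)
  case (pCons a p)
  have "f (Z (pCons a p) v) = s a (f v) + Z [:-1, 1:] (Z (pcompose p [:-1, 1:]) (f v))"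
    by (simp add: L.poly_act_pCons F.add F.scale f_L pCons.IH scale_minus_left)
  then show ?case
    by (simp only: pcompose_pCons L.poly_act_add L.poly_act_mult L.poly_act_const)
qed simp

lemma Z_bij: "p \<noteq> 0 \<Longrightarrow> bij (Z p)"
  using rational by (simp add: rational_sl2_module_def zact_eq)

lemma Z_inj: "p \<noteq> 0 \<Longrightarrow> Z p x = Z p y \<Longrightarrow> x = y"
  using Z_bij by (metis bij_pointE)

lemma Z_surj: "p \<noteq> 0 \<Longrightarrow> \<exists>x. Z p x = y"
  using Z_bij by (metis bij_pointE)

text \<open>The \<open>\<complex>(z)\<close>-scalar multiplication: \<open>p/q\<close> acts by \<open>q(L\<^sub>0)\<^sup>-\<^sup>1 p(L\<^sub>0)\<close>.\<close>

definition Kscale :: "ratfun \<Rightarrow> 'v \<Rightarrow> 'v" where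
  "Kscale r v = (SOME w. \<exists>p q. q \<noteq> 0 \<and> r = Fract p q \<and> Z q w = Z p v)"

lemma Z_Kscale_Fract:
  assumes q: "q \<noteq> 0"
  shows "Z q (Kscale (Fract p q) v) = Z p v"
proof -
  obtain w where "Z q w = Z p v" using Z_surj[OF q] by blast
  then have "\<exists>w p' q'. q' \<noteq> 0 \<and> Fract p q = Fract p' q' \<and> Z q' w = Z p' v"
    using q by blast
  then have "\<exists>p' q'. q' \<noteq> 0 \<and> Fract p q = Fract p' q' \<and> Z q' (Kscale (Fract p q) v) = Z p' v"
    unfolding Kscale_def by (rule someI_ex)
  then obtain p' q' where pq: "q' \<noteq> 0" "Fract p q = Fract p' q'"
    and w: "Z q' (Kscale (Fract p q) v) = Z p' v"
    by blast
  from pq q have "q * p' = q' * p" by (simp add: eq_fract mult.commute)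
  then have "Z q' (Z q (Kscale (Fract p q) v)) = Z q' (Z p v)"
    by (metis L.poly_act_commute L.poly_act_mult w)
  then show ?thesis using Z_inj[OF pq(1)] by blast
qed

lemma Kscale_eqI: "q \<noteq> 0 \<Longrightarrow> Z q w = Z p v \<Longrightarrow> Kscale (Fract p q) v = w"
  using Z_Kscale_Fract Z_inj by metis

sublocale K: vector_space Kscale
proof
  fix a b :: ratfun and x y :: 'v
  obtain p q where a: "a = Fract p q" "q \<noteq> 0" by (cases a)
  obtain p' q' where b: "b = Fract p' q'" "q' \<noteq> 0" by (cases b)
  have qq: "q * q' \<noteq> 0" using a b by simp
  show "Kscale a (x + y) = Kscale a x + Kscale a y"
    unfolding a(1) by (rule Kscale_eqI[OF a(2)]) (simp add: L.poly_act_add_right Z_Kscale_Fract[OF a(2)])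
  show "Kscale 1 x = x"
    unfolding One_fract_def by (rule Kscale_eqI) auto
  have "Z (q * q') (Kscale a x + Kscale b x) = Z q' (Z q (Kscale a x)) + Z q (Z q' (Kscale b x))"
    by (simp only: L.poly_act_add_right L.poly_act_mult mult.commute[of q] L.poly_act_commute[of q])
  also have "\<dots> = Z (q' * p + q * p') x"
    unfolding a(1) b(1)
    by (simp only: Z_Kscale_Fract[OF a(2)] Z_Kscale_Fract[OF b(2)] L.poly_act_add L.poly_act_mult)
  finally have "Kscale (Fract (q' * p + q * p') (q * q')) x = Kscale a x + Kscale b x"
    by (rule Kscale_eqI[OF qq])
  moreover have "a + b = Fract (q' * p + q * p') (q * q')"
    using a b by (simp add: mult.commute)
  ultimately show "Kscale (a + b) x = Kscale a x + Kscale b x"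
    by simp
  have "Z (q * q') (Kscale a (Kscale b x)) = Z q' (Z q (Kscale a (Kscale b x)))"
    by (simp only: L.poly_act_mult mult.commute[of q])
  also have "\<dots> = Z p (Z q' (Kscale b x))"
    unfolding a(1) by (simp only: Z_Kscale_Fract[OF a(2)] L.poly_act_commute[of q'])
  also have "\<dots> = Z (p * p') x"
    unfolding b(1) by (simp only: L.poly_act_mult Z_Kscale_Fract[OF b(2)])
  finally have "Kscale (Fract (p * p') (q * q')) x = Kscale a (Kscale b x)"
    by (rule Kscale_eqI[OF qq])
  then show "Kscale a (Kscale b x) = Kscale (a * b) x"
    using a b by simp
qed

lemma Kscale_poly: "Kscale (Fract p 1) v = Z p v"
  by (rule Kscale_eqI) auto

lemma scale_eq_Kscale: "s c v = Kscale (Fract [:c:] 1) v"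
  by (simp add: Kscale_poly)

lemma h_eq_Kscale: "h v = Kscale (Fract [:0, -2:] 1) v"
  by (simp add: Kscale_poly h_eq_Z)

lemma Kscale_inverse: "q \<noteq> 0 \<Longrightarrow> Kscale (Fract 1 q) (Z q v) = v"
  by (rule Kscale_eqI) simp_all

lemma e_Kscale: "e (Kscale r v) = Kscale (fract_shift 1 r) (e v)"
proof (cases r)
  case (Fract p q)
  have "Z (pcompose q [:1, 1:]) (e (Kscale r v)) = e (Z q (Kscale r v))"
    by (simp only: e_Z)
  also have "\<dots> = Z (pcompose p [:1, 1:]) (e v)"
    unfolding Fract(1) by (simp only: Z_Kscale_Fract[OF Fract(2)] e_Z)
  finally have "Kscale (Fract (pcompose p [:1, 1:]) (pcompose q [:1, 1:])) (e v) = e (Kscale r v)"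
    by (rule Kscale_eqI[rotated]) (simp add: Fract)
  with Fract show ?thesis by (simp add: fract_shift_Fract)
qed

lemma K_finite_span: "\<exists>S. finite S \<and> K.span S = UNIV"
proof -
  obtain S where S: "finite S" "\<And>v. \<exists>q c. q \<noteq> 0 \<and> Z q v = (\<Sum>x\<in>S. Z (c x) x)"
    using rational unfolding rational_sl2_module_def zact_eq by blast
  have "v \<in> K.span S" for v
  proof -
    obtain q c where qc: "q \<noteq> 0" "Z q v = (\<Sum>x\<in>S. Z (c x) x)" using S(2) by blast
    have "v = Kscale (Fract 1 q) (\<Sum>x\<in>S. Kscale (Fract (c x) 1) x)"
      unfolding Kscale_poly qc(2)[symmetric] Kscale_inverse[OF qc(1)] ..
    also have "\<dots> \<in> K.span S"
      by (intro K.span_scale K.span_sum K.span_base)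
    finally show ?thesis .
  qed
  with S(1) show ?thesis by blast
qed

definition K_basis :: "'v set" where
  "K_basis = (SOME B. finite B \<and> K.independent B \<and> K.span B = UNIV)"

sublocale K: finite_dimensional_vector_space Kscale K_basis
proof -
  obtain S where S: "finite S" "K.span S = UNIV" using K_finite_span by blast
  obtain B where B: "B \<subseteq> S" "K.independent B" "S \<subseteq> K.span B"
    using K.maximal_independent_subset[of S] by blast
  have "K.span S \<subseteq> K.span B"
    using B(3) by (simp add: K.span_minimal)
  with S B have "finite B \<and> K.independent B \<and> K.span B = UNIV"
    using finite_subset by auto
  then have "finite K_basis \<and> K.independent K_basis \<and> K.span K_basis = UNIV"
    unfolding K_basis_def by (rule someI)
  then show "finite_dimensional_vector_space Kscale K_basis"
    by unfold_locales auto
qed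

lemma Z_in_K_subspace_iff:
  assumes "K.subspace U" "p \<noteq> 0"
  shows "Z p v \<in> U \<longleftrightarrow> v \<in> U"
  using assms K.subspace_scale Kscale_inverse[of p v] Kscale_poly[of p v] by metis

abbreviation rsub :: "'v set \<Rightarrow> bool" where
  "rsub U \<equiv> rational_submodule s e f h U"

lemma rational_submodule_iff:
  "rsub U \<longleftrightarrow> K.subspace U \<and> e ` U \<subseteq> U \<and> f ` U \<subseteq> U"
proof
  assume R: "rsub U"
  then have U: "subspace U" "h ` U \<subseteq> U"
    and saturated: "\<And>q v. q \<noteq> 0 \<Longrightarrow> Z q v \<in> U \<Longrightarrow> v \<in> U"
    by (auto simp: rational_submodule_def zact_eq)
  have "L ` U \<subseteq> U" using U subspace_scale unfolding L0_def by blast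
  then have "Kscale r v \<in> U" if "v \<in> U" for r v
    by (cases r) (metis Z_Kscale_Fract L.poly_act_in_subspace U(1) that saturated)
  then have "K.subspace U"
    using U(1) by (simp add: K.subspace_def subspace_def)
  with R show "K.subspace U \<and> e ` U \<subseteq> U \<and> f ` U \<subseteq> U"
    by (simp add: rational_submodule_def)
next
  assume U: "K.subspace U \<and> e ` U \<subseteq> U \<and> f ` U \<subseteq> U"
  then have "subspace U" "h ` U \<subseteq> U"
    by (auto simp: subspace_def K.subspace_def scale_eq_Kscale h_eq_Kscale)
  with U show "rsub U"
    by (simp add: rational_submodule_def zact_eq Z_in_K_subspace_iff)
qed

lemma rsubD:
  assumes "rsub U"
  shows "K.subspace U" "x \<in> U \<Longrightarrow> e x \<in> U" "x \<in> U \<Longrightarrow> f x \<in> U"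
  using assms by (auto simp: rational_submodule_iff)

lemma e_funpow_f:
  "e ((f ^^ Suc n) v) = (f ^^ Suc n) (e v) + Z (sl2_coeff (Suc n)) ((f ^^ n) v)"
proof (induction n)
  case 0
  then show ?case
    using e_f_commutator[of v] h_eq_Z[of v] by (simp add: sl2_coeff_def algebra_simps)
next
  case (Suc n)
  let ?w = "(f ^^ Suc n) v"
  have "e (f ?w) = f (e ?w) + h ?w"
    using e_f_commutator[of ?w] by (simp add: algebra_simps)
  also have "\<dots> = ((f ^^ Suc (Suc n)) (e v) + Z (pcompose (sl2_coeff (Suc n)) [:-1, 1:]) ?w) + Z [:0, -2:] ?w"
    unfolding Suc.IH by (simp only: F.add f_Z funpow.simps(2) comp_apply h_eq_Z)
  also have "\<dots> = (f ^^ Suc (Suc n)) (e v) + Z (sl2_coeff (Suc (Suc n))) ?w"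
    by (simp only: add.assoc L.poly_act_add[symmetric] sl2_coeff_step)
  finally show ?case by simp
qed

lemma K_subspace_vimage_e:
  assumes "K.subspace U"
  shows "K.subspace {v. e v \<in> U}"
  using assms by (simp add: K.subspace_def E.add e_Kscale)

lemma e_funpow_f_modulo:
  assumes A: "rsub A" and ex: "e x \<in> A"
  shows "e ((f ^^ Suc j) x) - Z (sl2_coeff (Suc j)) ((f ^^ j) x) \<in> A"
proof -
  have "(f ^^ Suc j) (e x) \<in> A"
    using ex rsubD(3)[OF A] by (induction j) auto
  then show ?thesis unfolding e_funpow_f by simp
qed

lemma e_span_funpow_f:
  assumes A: "rsub A" and ex: "e x \<in> A"
  shows "e ` K.span (A \<union> (\<lambda>j. (f ^^ j) x) ` {..<Suc d}) \<subseteq> K.span (A \<union> (\<lambda>j. (f ^^ j) x) ` {..<d})"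
proof -
  let ?M = "K.span (A \<union> (\<lambda>j. (f ^^ j) x) ` {..<d})"
  have M: "K.subspace ?M" by simp
  have A_M: "A \<subseteq> ?M" by (auto intro: K.span_base)
  have "e ((f ^^ Suc j) x) \<in> ?M" if "j < d" for j
  proof -
    let ?c = "Z (sl2_coeff (Suc j)) ((f ^^ j) x)"
    have "e ((f ^^ Suc j) x) - ?c \<in> ?M" using e_funpow_f_modulo[OF A ex] A_M by blast
    moreover have "?c \<in> ?M"
      using that Z_in_K_subspace_iff[OF M sl2_coeff_nonzero] by (simp add: K.span_base)
    ultimately have "(e ((f ^^ Suc j) x) - ?c) + ?c \<in> ?M" by (rule K.subspace_add[OF M])
    then show ?thesis by simp
  qed
  moreover have "e a \<in> ?M" if "a \<in> A" for a using rsubD(2)[OF A that] A_M by blast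
  moreover have "e x \<in> ?M" using ex A_M by blast
  ultimately have "A \<union> (\<lambda>j. (f ^^ j) x) ` {..<Suc d} \<subseteq> {v. e v \<in> ?M}"
    by (auto simp: less_Suc_eq_0_disj)
  then have "K.span (A \<union> (\<lambda>j. (f ^^ j) x) ` {..<Suc d}) \<subseteq> {v. e v \<in> ?M}"
    by (rule K.span_minimal) (rule K_subspace_vimage_e[OF M])
  then show ?thesis by blast
qed

text \<open>Let \<open>d\<close> be least with \<open>f\<^sup>d x\<close> in the \<open>\<complex>(z)\<close>-span of \<open>A\<close> and \<open>f\<^sup>j x\<close>, \<open>j < d\<close>.
  Applying \<open>e\<close> shows that \<open>f\<^sup>d\<^sup>-\<^sup>1 x\<close> already lies in the span of \<open>A\<close> and its predecessors.\<close>

lemma e_injective_modulo: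
  assumes A: "rsub A" and ex: "e x \<in> A"
  shows "x \<in> A"
proof (rule ccontr)
  assume "x \<notin> A"
  define y where "y j = (f ^^ j) x" for j
  define M where "M d = K.span (A \<union> y ` {..<d})" for d
  have M_sub: "K.subspace (M d)" for d unfolding M_def by simp
  obtain d0 where "y d0 \<in> M d0"
    unfolding M_def using K.exists_in_span_of_predecessors by blast
  define d where "d = (LEAST d. y d \<in> M d)"
  have y_d: "y d \<in> M d" unfolding d_def by (rule LeastI) fact
  have y_less: "y j \<notin> M j" if "j < d" for j
    using not_less_Least[of j] that unfolding d_def by blast
  have "d \<noteq> 0"
  proof
    assume "d = 0"
    with y_d have "x \<in> K.span A" by (simp add: M_def y_def)
    with rsubD(1)[OF A] \<open>x \<notin> A\<close> show False by (metis K.span_eq_iff)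
  qed
  then obtain d' where d: "d = Suc d'" by (cases d) auto
  with y_d e_span_funpow_f[OF A ex, of d'] have "e (y (Suc d')) \<in> M d'"
    unfolding M_def y_def by blast
  moreover have "e (y (Suc d')) - Z (sl2_coeff (Suc d')) (y d') \<in> M d'"
    using e_funpow_f_modulo[OF A ex] unfolding M_def y_def by (blast intro: K.span_base)
  ultimately have "e (y (Suc d')) - (e (y (Suc d')) - Z (sl2_coeff (Suc d')) (y d')) \<in> M d'"
    by (rule K.subspace_diff[OF M_sub])
  then have "y d' \<in> M d'"
    using Z_in_K_subspace_iff[OF M_sub sl2_coeff_nonzero] by simp
  with y_less d show False by simp
qed

lemma rsub_zero: "rsub {0}"
  by (simp add: rational_submodule_iff E.zero F.zero)

lemma rsub_UNIV: "rsub UNIV"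
  by (simp add: rational_submodule_iff)

lemma filtration_length_le_dimension:
  assumes "rational_filtration s e f h n U"
  shows "n \<le> K.dimension"
proof -
  have "i \<le> K.dim (U i)" if "i \<le> n" for i
    using that
  proof (induction i)
    case (Suc i)
    with assms have "K.subspace (U i)" "K.subspace (U (Suc i))" "U i \<subset> U (Suc i)"
      by (auto simp: rational_filtration_def rational_submodule_iff)
    then have "K.dim (U i) < K.dim (U (Suc i))"
      by (metis K.dim_psubset K.span_eq_iff)
    with Suc show ?case by simp
  qed simp
  with K.dim_subset_UNIV[of "U n"] show ?thesis by (meson le_refl le_trans)
qed

lemma exists_filtration: "\<exists>n U. rational_filtration s e f h n U"
proof (cases "(UNIV :: 'v set) = {0}")
  case True
  show ?thesis
  proof (intro exI)
    show "rational_filtration s e f h 0 (\<lambda>_. {0})"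
      using True by (simp add: rational_filtration_def rsub_UNIV)
  qed
next
  case False
  show ?thesis
  proof (intro exI)
    show "rational_filtration s e f h 1 (\<lambda>i. if i = 0 then {0} else UNIV)"
      using False by (auto simp: rational_filtration_def rsub_zero rsub_UNIV)
  qed
qed

lemma rational_length_filtration: "\<exists>U. rational_filtration s e f h (rational_length s e f h) U"
proof -
  obtain n U where "rational_filtration s e f h n U" using exists_filtration by blast
  then show ?thesis
    unfolding rational_length_eq_Greatest
    by (intro GreatestI_nat[of "\<lambda>n. \<exists>U. rational_filtration s e f h n U" n K.dimension])
      (blast intro: filtration_length_le_dimension)+
qed

lemma filtration_le_rational_length:
  assumes "rational_filtration s e f h n U"
  shows "n \<le> rational_length s e f h"
  unfolding rational_length_eq_Greatest
  by (rule Greatest_le_nat[of "\<lambda>n. \<exists>U. rational_filtration s e f h n U" n K.dimension])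
    (use assms in \<open>blast intro: filtration_length_le_dimension\<close>)+

definition rational_cover :: "'v set \<Rightarrow> 'v set \<Rightarrow> bool" where
  "rational_cover A' A \<longleftrightarrow> rsub A' \<and> rsub A \<and> A' \<subset> A \<and>
     (\<forall>Y. rsub Y \<longrightarrow> A' \<subseteq> Y \<longrightarrow> Y \<subseteq> A \<longrightarrow> Y = A' \<or> Y = A)"

lemma rational_filtration_insert:
  assumes U: "rational_filtration s e f h n U" and i: "i < n"
    and Y: "rsub Y" "U i \<subset> Y" "Y \<subset> U (Suc i)"
  shows "rational_filtration s e f h (Suc n)
           (\<lambda>j. if j \<le> i then U j else if j = Suc i then Y else U (j - 1))" (is "rational_filtration s e f h (Suc n) ?U'")
  unfolding rational_filtration_def
proof (intro conjI allI impI)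
  have chain: "\<And>k. k < n \<Longrightarrow> U k \<subset> U (Suc k)"
    using U by (simp add: rational_filtration_def)
  fix j assume j: "j < Suc n"
  consider "Suc j \<le> i" | "j = i" | "j = Suc i" | "Suc i < j"
    by linarith
  then show "?U' j \<subset> ?U' (Suc j)"
  proof cases
    case 1
    then show ?thesis using chain[of j] i by simp
  next
    case 4
    then obtain k where "j = Suc k" "i < k" by (cases j) auto
    then show ?thesis using chain[of k] j by simp
  qed (use Y in simp_all)
qed (use U Y(1) i in \<open>auto simp: rational_filtration_def\<close>)

lemma longest_filtration_covers:
  assumes U: "rational_filtration s e f h (rational_length s e f h) U"
    and i: "i < rational_length s e f h"
  shows "rational_cover (U i) (U (Suc i))"
  unfolding rational_cover_def
proof (intro conjI allI impI)
  show "rsub (U i)" "rsub (U (Suc i))" "U i \<subset> U (Suc i)"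
    using U i by (auto simp: rational_filtration_def)
  fix Y assume Y: "rsub Y" "U i \<subseteq> Y" "Y \<subseteq> U (Suc i)"
  show "Y = U i \<or> Y = U (Suc i)"
  proof (rule ccontr)
    assume "\<not> (Y = U i \<or> Y = U (Suc i))"
    with Y have "U i \<subset> Y" "Y \<subset> U (Suc i)" by auto
    from rational_filtration_insert[OF U i Y(1) this] show False
      using filtration_le_rational_length by fastforce
  qed
qed

end

section \<open>Eigenvectors on simple subquotients\<close>

locale subquotient_endo = rational_module s e f h
  for s :: "complex \<Rightarrow> 'v::ab_group_add \<Rightarrow> 'v" and e f h +
  fixes A A' :: "'v set" and T :: "'v \<Rightarrow> 'v"
  assumes rsub_A: "rsub A" and rsub_A': "rsub A'" and A'_A: "A' \<subseteq> A"
    and K_linear_T: "Vector_Spaces.linear Kscale Kscale T"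
    and T_A: "T ` A \<subseteq> A" and T_A': "T ` A' \<subseteq> A'"
    and T_e: "\<And>a. a \<in> A \<Longrightarrow> T (e a) - e (T a) \<in> A'"
begin

sublocale KT: linear_endo Kscale T
  by (rule linear_endo.intro[OF K.vector_space_axioms linear_endo_axioms.intro[OF K_linear_T]])

lemma K_subspace_A: "K.subspace A" and K_subspace_A': "K.subspace A'"
  using rsub_A rsub_A' by (simp_all add: rational_submodule_iff)

lemma funpow_T_A: "a \<in> A \<Longrightarrow> (T ^^ k) a \<in> A"
  using T_A by (induction k) auto

lemma funpow_T_e: "a \<in> A \<Longrightarrow> (T ^^ k) (e a) - e ((T ^^ k) a) \<in> A'"
proof (induction k)
  case (Suc k)
  have split: "(T ^^ Suc k) (e a) - e ((T ^^ Suc k) a)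
      = T ((T ^^ k) (e a) - e ((T ^^ k) a)) + (T (e ((T ^^ k) a)) - e (T ((T ^^ k) a)))"
    by (simp add: KT.T.diff)
  have "T ((T ^^ k) (e a) - e ((T ^^ k) a)) \<in> A'" using Suc T_A' by blast
  moreover have "T (e ((T ^^ k) a)) - e (T ((T ^^ k) a)) \<in> A'"
    using T_e funpow_T_A Suc.prems by blast
  ultimately show ?case unfolding split by (rule K.subspace_add[OF K_subspace_A'])
qed (use K.subspace_0[OF K_subspace_A'] in simp)

definition annihilates :: "nat \<Rightarrow> (nat \<Rightarrow> ratfun) \<Rightarrow> bool" where
  "annihilates N g \<longleftrightarrow> (\<forall>a\<in>A. (\<Sum>k\<le>N. Kscale (g k) ((T ^^ k) a)) \<in> A')"

lemma annihilates_scale: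
  assumes "annihilates N g"
  shows "annihilates N (\<lambda>k. g k * c)"
proof -
  have "(\<Sum>k\<le>N. Kscale (g k * c) ((T ^^ k) a)) = Kscale c (\<Sum>k\<le>N. Kscale (g k) ((T ^^ k) a))" for a
    by (simp add: K.scale_sum_right mult.commute)
  then show ?thesis
    using assms K.subspace_scale[OF K_subspace_A'] by (simp add: annihilates_def)
qed

lemma annihilates_diff: "annihilates N g \<Longrightarrow> annihilates N g' \<Longrightarrow> annihilates N (\<lambda>k. g k - g' k)"
  unfolding annihilates_def
  by (simp add: K.scale_left_diff_distrib sum_subtractf K.subspace_diff[OF K_subspace_A'])

text \<open>Apply \<open>e\<close> to the relation: \<open>e\<close> is semilinear for the shift \<open>z \<mapsto> z + 1\<close>, commutes
  with \<open>T\<close> modulo \<open>A'\<close>, and is injective modulo \<open>A'\<close>.\<close>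

lemma annihilates_shift:
  assumes "annihilates N g"
  shows "annihilates N (\<lambda>k. fract_shift (-1) (g k))"
  unfolding annihilates_def
proof
  fix b assume b: "b \<in> A"
  define X where "X = (\<Sum>k\<le>N. Kscale (fract_shift (-1) (g k)) ((T ^^ k) b))"
  have e_X: "e X = (\<Sum>k\<le>N. Kscale (g k) (e ((T ^^ k) b)))"
    unfolding X_def by (simp add: E.sum e_Kscale fract_shift_shift fract_shift_zero)
  have "(\<Sum>k\<le>N. Kscale (g k) ((T ^^ k) (e b))) - e X
      = (\<Sum>k\<le>N. Kscale (g k) ((T ^^ k) (e b) - e ((T ^^ k) b)))"
    unfolding e_X by (simp add: K.scale_right_diff_distrib sum_subtractf)
  also have "\<dots> \<in> A'"
    using funpow_T_e[OF b] by (intro K.subspace_sum[OF K_subspace_A'] K.subspace_scale[OF K_subspace_A'])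
  finally have "(\<Sum>k\<le>N. Kscale (g k) ((T ^^ k) (e b))) - e X \<in> A'" .
  moreover have "(\<Sum>k\<le>N. Kscale (g k) ((T ^^ k) (e b))) \<in> A'"
    using assms rsubD(2)[OF rsub_A b] unfolding annihilates_def by blast
  ultimately have "e X \<in> A'"
    using K.subspace_diff[OF K_subspace_A'] by fastforce
  then show "X \<in> A'" by (rule e_injective_modulo[OF rsub_A'])
qed

lemma annihilates_exists: "\<exists>N g. (\<exists>k\<le>N. g k \<noteq> 0) \<and> annihilates N g"
proof -
  obtain P where P: "P \<noteq> 0" "\<And>v. poly_act Kscale T P v = 0"
    using K.annihilating_poly[OF K_linear_T] by blast
  then have "annihilates (degree P) (coeff P)"
    unfolding annihilates_def using K.subspace_0[OF K_subspace_A'] by (simp add: poly_act_def)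
  moreover have "coeff P (degree P) \<noteq> 0" using P(1) by simp
  ultimately show ?thesis by blast
qed

lemma minimal_annihilator_shift_invariant:
  assumes g: "annihilates N g" "k0 \<le> N" "g k0 = 1"
    and minimal: "\<And>g'. annihilates N g' \<Longrightarrow> (\<exists>k\<le>N. g' k \<noteq> 0) \<Longrightarrow>
                    card {k. k \<le> N \<and> g k \<noteq> 0} \<le> card {k. k \<le> N \<and> g' k \<noteq> 0}"
    and k: "k \<le> N"
  shows "fract_shift (-1) (g k) = g k"
proof (rule ccontr)
  assume "fract_shift (-1) (g k) \<noteq> g k"
  define g' where "g' j = g j - fract_shift (-1) (g j)" for j
  have "annihilates N g'"
    unfolding g'_def by (rule annihilates_diff[OF g(1) annihilates_shift[OF g(1)]])
  moreover have "g' k \<noteq> 0" using \<open>fract_shift (-1) (g k) \<noteq> g k\<close> by (simp add: g'_def)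
  moreover have "card {j. j \<le> N \<and> g' j \<noteq> 0} < card {j. j \<le> N \<and> g j \<noteq> 0}"
  proof -
    have "g' j = 0" if "g j = 0 \<or> j = k0" for j
      using that g(3) by (auto simp: g'_def)
    then have "{j. j \<le> N \<and> g' j \<noteq> 0} \<subseteq> {j. j \<le> N \<and> g j \<noteq> 0} - {k0}"
      by blast
    then have "card {j. j \<le> N \<and> g' j \<noteq> 0} \<le> card ({j. j \<le> N \<and> g j \<noteq> 0} - {k0})"
      by (intro card_mono) simp_all
    also have "\<dots> < card {j. j \<le> N \<and> g j \<noteq> 0}"
      using g(2,3) by (intro card_Diff1_less) simp_all
    finally show ?thesis .
  qed
  ultimately show False using minimal k by fastforce
qed

text \<open>A relation with fewest nonzero coefficients, normalised at one coefficient, has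
  shift-invariant, hence constant, coefficients.\<close>

lemma annihilates_const:
  "\<exists>N c. (\<exists>k\<le>N. c k \<noteq> 0) \<and> (\<forall>a\<in>A. (\<Sum>k\<le>N. s (c k) ((T ^^ k) a)) \<in> A')"
proof -
  obtain N g0 where g0: "\<exists>k\<le>N. g0 k \<noteq> 0" "annihilates N g0"
    using annihilates_exists by blast
  let ?supp = "\<lambda>g. card {k. k \<le> N \<and> g k \<noteq> 0}"
  obtain g where g: "annihilates N g" "\<exists>k\<le>N. g k \<noteq> 0"
    and minimal: "\<And>g'. annihilates N g' \<Longrightarrow> (\<exists>k\<le>N. g' k \<noteq> 0) \<Longrightarrow> ?supp g \<le> ?supp g'"
    using ex_has_least_nat[of "\<lambda>g. annihilates N g \<and> (\<exists>k\<le>N. g k \<noteq> 0)" g0 ?supp] g0 by blast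
  then obtain k0 where k0: "k0 \<le> N" "g k0 \<noteq> 0" by blast
  define g1 where "g1 k = g k * inverse (g k0)" for k
  have g1: "annihilates N g1" "g1 k0 = 1"
    unfolding g1_def using annihilates_scale[OF g(1)] k0(2) by simp_all
  have "{k. k \<le> N \<and> g1 k \<noteq> 0} = {k. k \<le> N \<and> g k \<noteq> 0}"
    using k0 by (auto simp: g1_def)
  with minimal have "\<And>g'. annihilates N g' \<Longrightarrow> (\<exists>k\<le>N. g' k \<noteq> 0) \<Longrightarrow>
      card {k. k \<le> N \<and> g1 k \<noteq> 0} \<le> card {k. k \<le> N \<and> g' k \<noteq> 0}"
    by simp
  then have "fract_shift (-1) (g1 k) = g1 k" if "k \<le> N" for k
    by (rule minimal_annihilator_shift_invariant[OF g1(1) k0(1) g1(2) _ that])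
  then have "fract_shift 1 (g1 k) = g1 k" if "k \<le> N" for k
    using fract_shift_shift[of 1 "-1" "g1 k"] that by (simp add: fract_shift_zero)
  then have "\<forall>k. \<exists>c. k \<le> N \<longrightarrow> g1 k = Fract [:c:] 1"
    using fract_shift_fixed_const by blast
  from choice[OF this] obtain c where c: "\<forall>k. k \<le> N \<longrightarrow> g1 k = Fract [:c k:] 1" ..
  have "c k0 \<noteq> 0" using c k0(1) g1(2) by (auto simp: One_fract_def eq_fract)
  moreover have "(\<Sum>k\<le>N. s (c k) ((T ^^ k) a)) \<in> A'" if "a \<in> A" for a
    using g1(1) that c by (simp add: annihilates_def scale_eq_Kscale)
  ultimately show ?thesis using k0(1) by blast
qed

lemma exists_eigenvector_modulo:
  assumes "A' \<subset> A"
  shows "\<exists>\<mu> a. a \<in> A \<and> a \<notin> A' \<and> T a - s \<mu> a \<in> A'"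
proof -
  have "linear_endo s T"
    by (intro linear_endo.intro vector_space_axioms linear_endo_axioms.intro)
      (simp add: Vector_Spaces.linear_iff vector_space_axioms scale_eq_Kscale KT.T.add KT.T.scale)
  then interpret CT: linear_endo s T .
  obtain N c where c: "\<exists>k\<le>N. c k \<noteq> 0" "\<forall>a\<in>A. (\<Sum>k\<le>N. s (c k) ((T ^^ k) a)) \<in> A'"
    using annihilates_const by blast
  obtain a0 where "a0 \<in> A" "a0 \<notin> A'" using assms by blast
  moreover have "subspace A" "subspace A'"
    using rsub_A rsub_A' by (simp_all add: rational_submodule_def)
  ultimately show ?thesis
    using eigenvector_modulo[OF \<open>linear_endo s T\<close> _ T_A _ sum_monom_nonzero[OF c(1)]] c(2)
    by (simp add: CT.poly_act_sum_monom)
qed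

end

section \<open>Homomorphisms between rational modules\<close>

lemma vector_space_fun_scale:
  assumes "vector_space s"
  shows "vector_space (fun_scale s :: complex \<Rightarrow> ('v \<Rightarrow> 'w::ab_group_add) \<Rightarrow> 'v \<Rightarrow> 'w)"
proof -
  interpret vector_space s by fact
  show ?thesis
    by unfold_locales (simp_all add: fun_scale_def fun_eq_iff scale_right_distrib scale_left_distrib)
qed

locale rational_pair = M1: rational_module s1 e1 f1 h1 + M2: rational_module s2 e2 f2 h2
  for s1 :: "complex \<Rightarrow> 'v::ab_group_add \<Rightarrow> 'v" and e1 f1 h1
    and s2 :: "complex \<Rightarrow> 'w::ab_group_add \<Rightarrow> 'w" and e2 f2 h2
begin

abbreviation Hom :: "('v \<Rightarrow> 'w) set" where
  "Hom \<equiv> sl2_hom s1 e1 f1 h1 s2 e2 f2 h2"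

sublocale FV: vector_space "fun_scale s2 :: complex \<Rightarrow> ('v \<Rightarrow> 'w) \<Rightarrow> 'v \<Rightarrow> 'w"
  by (rule vector_space_fun_scale[OF M2.vector_space_axioms])

lemma hom_module_hom: "\<phi> \<in> Hom \<Longrightarrow> module_hom s1 s2 \<phi>"
  by (simp add: sl2_hom_def module_hom_iff_linear)

lemmas hom_add = module_hom.add[OF hom_module_hom]
  and hom_scale = module_hom.scale[OF hom_module_hom]
  and hom_zero = module_hom.zero[OF hom_module_hom]
  and hom_diff = module_hom.diff[OF hom_module_hom]

lemma hom_e: "\<phi> \<in> Hom \<Longrightarrow> \<phi> (e1 x) = e2 (\<phi> x)"
  and hom_f: "\<phi> \<in> Hom \<Longrightarrow> \<phi> (f1 x) = f2 (\<phi> x)"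
  and hom_h: "\<phi> \<in> Hom \<Longrightarrow> \<phi> (h1 x) = h2 (\<phi> x)"
  by (simp_all add: sl2_hom_def fun_eq_iff)

lemma hom_L: "\<phi> \<in> Hom \<Longrightarrow> \<phi> (M1.L x) = M2.L (\<phi> x)"
  by (simp only: L0_def hom_scale hom_h)

lemma hom_Z: "\<phi> \<in> Hom \<Longrightarrow> \<phi> (M1.Z p x) = M2.Z p (\<phi> x)"
  by (induction p) (simp_all add: M1.L.poly_act_pCons M2.L.poly_act_pCons hom_zero hom_add hom_scale hom_L)

lemma hom_Kscale: "\<phi> \<in> Hom \<Longrightarrow> \<phi> (M1.Kscale r x) = M2.Kscale r (\<phi> x)"
proof (cases r)
  case (Fract p q)
  assume "\<phi> \<in> Hom"
  then have "M2.Z q (\<phi> (M1.Kscale r x)) = M2.Z p (\<phi> x)"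
    using Fract by (simp add: hom_Z[symmetric] M1.Z_Kscale_Fract)
  with Fract show ?thesis by (simp add: M2.Kscale_eqI)
qed

lemma in_HomI:
  assumes "\<And>x y. \<phi> (x + y) = \<phi> x + \<phi> y" "\<And>c x. \<phi> (s1 c x) = s2 c (\<phi> x)"
    and "\<And>x. \<phi> (e1 x) = e2 (\<phi> x)" "\<And>x. \<phi> (f1 x) = f2 (\<phi> x)" "\<And>x. \<phi> (h1 x) = h2 (\<phi> x)"
  shows "\<phi> \<in> Hom"
  using assms M1.vector_space_axioms M2.vector_space_axioms
  by (simp add: sl2_hom_def Vector_Spaces.linear_iff fun_eq_iff)

lemma Hom_subspace: "FV.subspace Hom"
  unfolding FV.subspace_def
proof (intro conjI ballI allI)
  show "0 \<in> Hom"
    by (rule in_HomI) (simp_all add: M2.E.zero M2.F.zero M2.H.zero)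
  show "\<phi> + \<psi> \<in> Hom" if \<phi>: "\<phi> \<in> Hom" and \<psi>: "\<psi> \<in> Hom" for \<phi> \<psi>
    by (rule in_HomI) (simp_all add: hom_add[OF \<phi>] hom_add[OF \<psi>] hom_scale[OF \<phi>] hom_scale[OF \<psi>]
      hom_e[OF \<phi>] hom_e[OF \<psi>] hom_f[OF \<phi>] hom_f[OF \<psi>] hom_h[OF \<phi>] hom_h[OF \<psi>]
      M2.E.add M2.F.add M2.H.add M2.scale_right_distrib)
  show "fun_scale s2 c \<phi> \<in> Hom" if \<phi>: "\<phi> \<in> Hom" for c \<phi>
    by (rule in_HomI) (simp_all add: fun_scale_def hom_add[OF \<phi>] hom_scale[OF \<phi>] hom_e[OF \<phi>]
      hom_f[OF \<phi>] hom_h[OF \<phi>] M2.E.scale M2.F.scale M2.H.scale M2.scale_right_distrib mult.commute)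
qed

lemma Hom_lincomb: "\<phi> \<in> Hom \<Longrightarrow> \<psi> \<in> Hom \<Longrightarrow> fun_scale s2 c \<phi> + fun_scale s2 d \<psi> \<in> Hom"
  by (intro FV.subspace_add[OF Hom_subspace] FV.subspace_scale[OF Hom_subspace])

lemma Hom_rsub_image_plus:
  assumes A: "M1.rsub A" and B': "M2.rsub B'" and \<phi>: "\<phi> \<in> Hom"
  shows "M2.rsub {b. \<exists>a\<in>A. b - \<phi> a \<in> B'}"
proof -
  note A_sub = M1.rsubD(1)[OF A] and B'_sub = M2.rsubD(1)[OF B']
  have "M2.K.subspace {b. \<exists>a\<in>A. b - \<phi> a \<in> B'}"
    unfolding M2.K.subspace_def
  proof (intro conjI ballI allI)
    have "0 - \<phi> 0 \<in> B'" using M2.K.subspace_0[OF B'_sub] \<phi> by (simp add: hom_zero)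
    with M1.K.subspace_0[OF A_sub] show "0 \<in> {b. \<exists>a\<in>A. b - \<phi> a \<in> B'}" by blast
    show "x + y \<in> {b. \<exists>a\<in>A. b - \<phi> a \<in> B'}" if "x \<in> {b. \<exists>a\<in>A. b - \<phi> a \<in> B'}"
      "y \<in> {b. \<exists>a\<in>A. b - \<phi> a \<in> B'}" for x y
    proof -
      from that obtain a a' where "a \<in> A" "x - \<phi> a \<in> B'" "a' \<in> A" "y - \<phi> a' \<in> B'" by blast
      moreover have "x + y - \<phi> (a + a') = (x - \<phi> a) + (y - \<phi> a')"
        using \<phi> by (simp add: hom_add)
      ultimately show ?thesis
        using M1.K.subspace_add[OF A_sub] M2.K.subspace_add[OF B'_sub] by (metis (mono_tags) mem_Collect_eq)
    qed
    show "M2.Kscale c x \<in> {b. \<exists>a\<in>A. b - \<phi> a \<in> B'}" if "x \<in> {b. \<exists>a\<in>A. b - \<phi> a \<in> B'}" for c x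
    proof -
      from that obtain a where "a \<in> A" "x - \<phi> a \<in> B'" by blast
      moreover have "M2.Kscale c x - \<phi> (M1.Kscale c a) = M2.Kscale c (x - \<phi> a)"
        using \<phi> by (simp add: hom_Kscale M2.K.scale_right_diff_distrib)
      ultimately show ?thesis
        using M1.K.subspace_scale[OF A_sub] M2.K.subspace_scale[OF B'_sub] by (metis (mono_tags) mem_Collect_eq)
    qed
  qed
  moreover have "e2 b - \<phi> (e1 a) = e2 (b - \<phi> a)" "f2 b - \<phi> (f1 a) = f2 (b - \<phi> a)" for a b
    using \<phi> by (simp_all add: hom_e hom_f M2.E.diff M2.F.diff)
  ultimately show ?thesis
    using M1.rsubD(2,3)[OF A] M2.rsubD(2,3)[OF B'] unfolding M2.rational_submodule_iff
    by (smt (verit) image_subset_iff mem_Collect_eq)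
qed


lemma Hom_rsub_vimage:
  assumes "M1.rsub A" "M2.rsub B'" "\<theta> \<in> Hom"
  shows "M1.rsub {x \<in> A. \<theta> x \<in> B'}"
  using assms
  by (auto simp: M1.rational_submodule_iff M2.rational_submodule_iff M1.K.subspace_def
      M2.K.subspace_def hom_zero hom_add hom_Kscale hom_e hom_f)

lemma cover_vimage_cases:
  assumes A: "M1.rational_cover A' A" and B': "M2.rsub B'" and \<theta>: "\<theta> \<in> Hom" "\<theta> ` A' \<subseteq> B'"
  shows "{x \<in> A. \<theta> x \<in> B'} = A' \<or> {x \<in> A. \<theta> x \<in> B'} = A"
proof -
  have "M1.rsub A" "A' \<subseteq> A" using A by (auto simp: M1.rational_cover_def)
  then have "M1.rsub {x \<in> A. \<theta> x \<in> B'}" "A' \<subseteq> {x \<in> A. \<theta> x \<in> B'}"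
    using Hom_rsub_vimage[OF _ B' \<theta>(1)] \<theta>(2) by auto
  with A show ?thesis unfolding M1.rational_cover_def by blast
qed

lemma cover_hom_injective:
  assumes A: "M1.rational_cover A' A" and B': "M2.rsub B'" and \<phi>: "\<phi> \<in> Hom" "\<phi> ` A' \<subseteq> B'"
    and a1: "a1 \<in> A" "\<phi> a1 \<notin> B'" and x: "x \<in> A" "\<phi> x \<in> B'"
  shows "x \<in> A'"
  using cover_vimage_cases[OF A B' \<phi>] a1 x by blast

lemma cover_hom_surjective:
  assumes A: "M1.rsub A" and B: "M2.rational_cover B' B" and \<phi>: "\<phi> \<in> Hom" "\<phi> ` A \<subseteq> B"
    and a1: "a1 \<in> A" "\<phi> a1 \<notin> B'" and b: "b \<in> B"
  shows "\<exists>a\<in>A. b - \<phi> a \<in> B'"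
proof -
  let ?I = "{b. \<exists>a\<in>A. b - \<phi> a \<in> B'}"
  have B_rsub: "M2.rsub B'" "M2.rsub B" and "B' \<subseteq> B"
    using B by (auto simp: M2.rational_cover_def)
  have "B' \<subseteq> ?I"
    using M1.K.subspace_0[OF M1.rsubD(1)[OF A]] \<phi>(1) by (force simp: hom_zero)
  moreover have "?I \<subseteq> B"
  proof
    fix b assume "b \<in> ?I"
    then obtain a where "a \<in> A" "b - \<phi> a \<in> B'" by blast
    with \<open>B' \<subseteq> B\<close> \<phi>(2) have "(b - \<phi> a) + \<phi> a \<in> B"
      by (intro M2.K.subspace_add[OF M2.rsubD(1)[OF B_rsub(2)]]) auto
    then show "b \<in> B" by simp
  qed
  moreover have "\<phi> a1 \<in> ?I"
    using a1(1) M2.K.subspace_0[OF M2.rsubD(1)[OF B_rsub(1)]] by force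
  ultimately have "?I = B"
    using B Hom_rsub_image_plus[OF A B_rsub(1) \<phi>(1)] a1(2) unfolding M2.rational_cover_def by blast
  with b show ?thesis by blast
qed

lemma lift_modulo:
  assumes A: "M1.rsub A" and B': "M2.rsub B'" and \<phi>: "\<phi> \<in> Hom" and \<psi>: "\<psi> \<in> Hom"
    and onto: "\<And>a. a \<in> A \<Longrightarrow> \<exists>a'\<in>A. \<psi> a - \<phi> a' \<in> B'"
  obtains T where "Vector_Spaces.linear M1.Kscale M1.Kscale T" "T ` A \<subseteq> A"
    "\<And>a. a \<in> A \<Longrightarrow> \<psi> a - \<phi> (T a) \<in> B'"
proof -
  note A_sub = M1.rsubD(1)[OF A] and B'_sub = M2.rsubD(1)[OF B']
  obtain \<beta> where \<beta>: "\<beta> \<subseteq> A" "M1.K.independent \<beta>" "M1.K.span \<beta> = A"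
    using M1.K.basis_subspace_exists[OF A_sub] by metis
  define pre where "pre b = (SOME a. a \<in> A \<and> \<psi> b - \<phi> a \<in> B')" for b
  have pre: "pre b \<in> A \<and> \<psi> b - \<phi> (pre b) \<in> B'" if "b \<in> \<beta>" for b
    unfolding pre_def by (rule someI_ex) (use onto \<beta>(1) that in blast)
  interpret KK: vector_space_pair M1.Kscale M1.Kscale ..
  define T where "T = KK.construct \<beta> pre"
  have T: "Vector_Spaces.linear M1.Kscale M1.Kscale T"
    unfolding T_def by (rule KK.linear_construct[OF \<beta>(2)])
  then interpret T: module_hom M1.Kscale M1.Kscale T by (simp add: module_hom_iff_linear)
  have "M1.K.span (pre ` \<beta>) \<subseteq> A"
    using pre A_sub by (intro M1.K.span_minimal) auto
  then have "T ` A \<subseteq> A"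
    using KK.construct_in_span[OF \<beta>(2)] unfolding T_def by blast
  moreover have "\<psi> a - \<phi> (T a) \<in> B'" if "a \<in> A" for a
  proof -
    have "M1.K.subspace {a. \<psi> a - \<phi> (T a) \<in> B'}"
      using M2.K.subspace_0[OF B'_sub] M2.K.subspace_add[OF B'_sub] M2.K.subspace_scale[OF B'_sub]
      by (auto simp: M1.K.subspace_def hom_zero[OF \<phi>] hom_zero[OF \<psi>] T.add hom_add[OF \<phi>] hom_add[OF \<psi>]
        T.scale hom_Kscale[OF \<phi>] hom_Kscale[OF \<psi>] M2.K.scale_right_diff_distrib[symmetric] add_diff_add)
    moreover have "\<beta> \<subseteq> {a. \<psi> a - \<phi> (T a) \<in> B'}"
      using pre by (auto simp: T_def KK.construct_basis[OF \<beta>(2)])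
    ultimately have "M1.K.span \<beta> \<subseteq> {a. \<psi> a - \<phi> (T a) \<in> B'}"
      by (rule M1.K.span_minimal[rotated])
    with \<beta>(3) that show ?thesis by blast
  qed
  ultimately show ?thesis using that T by blast
qed


lemma lift_subquotient_endo:
  assumes A: "M1.rational_cover A' A" and B': "M2.rsub B'"
    and \<phi>: "\<phi> \<in> Hom" and \<phi>_inj: "\<And>x. x \<in> A \<Longrightarrow> \<phi> x \<in> B' \<Longrightarrow> x \<in> A'"
    and \<psi>: "\<psi> \<in> Hom" "\<psi> ` A' \<subseteq> B'"
    and T: "Vector_Spaces.linear M1.Kscale M1.Kscale T" "T ` A \<subseteq> A"
    and \<psi>_\<phi>T: "\<And>a. a \<in> A \<Longrightarrow> \<psi> a - \<phi> (T a) \<in> B'"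
  shows "subquotient_endo s1 e1 f1 h1 A A' T"
proof -
  have A_rsub: "M1.rsub A'" "M1.rsub A" "A' \<subseteq> A" using A by (auto simp: M1.rational_cover_def)
  note B'_sub = M2.rsubD(1)[OF B']
  have "T ` A' \<subseteq> A'"
  proof
    fix y assume "y \<in> T ` A'"
    then obtain x where x: "x \<in> A'" "y = T x" by blast
    with A_rsub(3) have "x \<in> A" by blast
    have "\<psi> x \<in> B'" using \<psi>(2) x(1) by blast
    then have "\<psi> x - (\<psi> x - \<phi> (T x)) \<in> B'"
      by (rule M2.K.subspace_diff[OF B'_sub _ \<psi>_\<phi>T[OF \<open>x \<in> A\<close>]])
    with \<phi>_inj T(2) \<open>x \<in> A\<close> x(2) show "y \<in> A'" by auto
  qed
  moreover have "T (e1 a) - e1 (T a) \<in> A'" if a: "a \<in> A" for a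
  proof (rule \<phi>_inj)
    show "T (e1 a) - e1 (T a) \<in> A"
      using T(2) a M1.rsubD[OF A_rsub(2)] by (auto intro: M1.K.subspace_diff)
    have "\<phi> (T (e1 a) - e1 (T a)) = e2 (\<psi> a - \<phi> (T a)) - (\<psi> (e1 a) - \<phi> (T (e1 a)))"
      using \<phi> \<psi>(1) by (simp add: hom_diff hom_e M2.E.diff)
    also have "\<dots> \<in> B'"
      using M2.rsubD(2)[OF B' \<psi>_\<phi>T[OF a]] \<psi>_\<phi>T[OF M1.rsubD(2)[OF A_rsub(2) a]]
      by (rule M2.K.subspace_diff[OF B'_sub])
    finally show "\<phi> (T (e1 a) - e1 (T a)) \<in> B'" .
  qed
  ultimately show ?thesis
    using A_rsub T
    by (intro subquotient_endo.intro M1.rational_module_axioms subquotient_endo_axioms.intro) auto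
qed

text \<open>If \<open>\<phi>\<close> induces an
  isomorphism, \<open>\<phi>\<^sup>-\<^sup>1\<psi>\<close> has an eigenvalue \<open>\<mu>\<close> on \<open>A/A'\<close>, and \<open>\<psi> - \<mu> \<phi>\<close> induces a
  non-injective, hence zero, map.\<close>

lemma schur_cover:
  assumes A: "M1.rational_cover A' A" and B: "M2.rational_cover B' B"
    and \<phi>: "\<phi> \<in> Hom" "\<phi> ` A \<subseteq> B" "\<phi> ` A' \<subseteq> B'" and \<psi>: "\<psi> \<in> Hom" "\<psi> ` A \<subseteq> B" "\<psi> ` A' \<subseteq> B'"
  shows "\<exists>c d. (c \<noteq> 0 \<or> d \<noteq> 0) \<and> (\<forall>a\<in>A. s2 c (\<phi> a) + s2 d (\<psi> a) \<in> B')"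
proof (cases "\<phi> ` A \<subseteq> B'")
  case True
  then have "\<forall>a\<in>A. s2 1 (\<phi> a) + s2 0 (\<psi> a) \<in> B'" by auto
  then show ?thesis by (intro exI[of _ 1] exI[of _ 0]) simp
next
  case False
  then obtain a1 where a1: "a1 \<in> A" "\<phi> a1 \<notin> B'" by blast
  have A_rsub: "M1.rsub A" "A' \<subset> A" using A by (auto simp: M1.rational_cover_def)
  have B'_rsub: "M2.rsub B'" using B by (simp add: M2.rational_cover_def)
  note B'_sub = M2.rsubD(1)[OF B'_rsub]
  obtain T where T: "Vector_Spaces.linear M1.Kscale M1.Kscale T" "T ` A \<subseteq> A"
    and \<psi>_\<phi>T: "\<And>a. a \<in> A \<Longrightarrow> \<psi> a - \<phi> (T a) \<in> B'"
    using lift_modulo[OF A_rsub(1) B'_rsub \<phi>(1) \<psi>(1)]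
      cover_hom_surjective[OF A_rsub(1) B \<phi>(1,2) a1] \<psi>(2) by blast
  interpret subquotient_endo s1 e1 f1 h1 A A' T
    by (rule lift_subquotient_endo[OF A B'_rsub \<phi>(1) cover_hom_injective[OF A B'_rsub \<phi>(1,3) a1]
          \<psi>(1,3) T \<psi>_\<phi>T])
  obtain \<mu> a where a: "a \<in> A" "a \<notin> A'" "T a - s1 \<mu> a \<in> A'"
    using exists_eigenvector_modulo A_rsub(2) by blast
  define \<theta> where "\<theta> = fun_scale s2 (- \<mu>) \<phi> + fun_scale s2 1 \<psi>"
  have \<theta>: "\<theta> \<in> Hom"
    unfolding \<theta>_def by (rule Hom_lincomb[OF \<phi>(1) \<psi>(1)])
  have \<theta>_apply: "\<theta> x = s2 (- \<mu>) (\<phi> x) + s2 1 (\<psi> x)" for x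
    by (simp add: \<theta>_def fun_scale_def)
  have B'_C: "M2.subspace B'" using B'_rsub by (simp add: rational_submodule_def)
  have "\<theta> x \<in> B'" if "x \<in> A'" for x
    unfolding \<theta>_apply using \<phi>(3) \<psi>(3) that
    by (intro M2.subspace_add[OF B'_C] M2.subspace_scale[OF B'_C]) auto
  then have "\<theta> ` A' \<subseteq> B'" by blast
  moreover have "\<theta> a \<in> B'"
  proof -
    have "\<theta> a = (\<psi> a - \<phi> (T a)) + \<phi> (T a - s1 \<mu> a)"
      using \<phi>(1) by (simp add: \<theta>_apply hom_diff hom_scale M2.scale_minus_left)
    also have "\<dots> \<in> B'"
      using \<psi>_\<phi>T[OF a(1)] \<phi>(3) a(3) by (blast intro: M2.K.subspace_add[OF B'_sub])
    finally show ?thesis .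
  qed
  ultimately have "{x \<in> A. \<theta> x \<in> B'} = A"
    using cover_vimage_cases[OF A B'_rsub \<theta>] a(1,2) by blast
  then have "\<forall>x\<in>A. s2 (- \<mu>) (\<phi> x) + s2 1 (\<psi> x) \<in> B'" by (auto simp: \<theta>_apply)
  then show ?thesis by (intro exI[of _ "- \<mu>"] exI[of _ 1]) simp
qed

definition Hom_layer :: "'v set \<Rightarrow> 'v set \<Rightarrow> 'w set \<Rightarrow> ('v \<Rightarrow> 'w) set" where
  "Hom_layer A' A B = {\<phi> \<in> Hom. (\<forall>x\<in>A'. \<phi> x = 0) \<and> (\<forall>x\<in>A. \<phi> x \<in> B)}"

lemma Hom_layer_subspace:
  assumes "M2.subspace B"
  shows "FV.subspace (Hom_layer A' A B)"
  using assms Hom_subspace unfolding Hom_layer_def FV.subspace_def M2.subspace_def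
  by (simp add: fun_scale_def)

lemma Hom_layer_codim_le_one:
  assumes A: "M1.rational_cover A' A" and B: "M2.rational_cover B' B"
    and \<phi>: "\<phi> \<in> Hom_layer A' A B" and \<psi>: "\<psi> \<in> Hom_layer A' A B"
  shows "\<exists>c d. (c \<noteq> 0 \<or> d \<noteq> 0) \<and> fun_scale s2 c \<phi> + fun_scale s2 d \<psi> \<in> Hom_layer A' A B'"
proof -
  have "0 \<in> B'" using B M2.K.subspace_0 by (auto simp: M2.rational_cover_def M2.rational_submodule_iff)
  with \<phi> \<psi> have \<phi>': "\<phi> \<in> Hom" "\<phi> ` A \<subseteq> B" "\<phi> ` A' \<subseteq> B'"
    and \<psi>': "\<psi> \<in> Hom" "\<psi> ` A \<subseteq> B" "\<psi> ` A' \<subseteq> B'"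
    by (auto simp: Hom_layer_def)
  obtain c d where cd: "c \<noteq> 0 \<or> d \<noteq> 0" "\<forall>a\<in>A. s2 c (\<phi> a) + s2 d (\<psi> a) \<in> B'"
    using schur_cover[OF A B \<phi>' \<psi>'] by metis
  with \<phi> \<psi> Hom_lincomb[OF \<phi>'(1) \<psi>'(1)]
  have "fun_scale s2 c \<phi> + fun_scale s2 d \<psi> \<in> Hom_layer A' A B'"
    by (simp add: Hom_layer_def fun_scale_def)
  with cd(1) show ?thesis by blast
qed

text \<open>The layers \<open>Hom_layer (U i) (U (i+1)) (V j)\<close>, \<open>j \<le> m\<close>, lead from the maps vanishing on
  \<open>U (i+1)\<close> to those vanishing on \<open>U i\<close>, in \<open>m\<close> steps of codimension at most one.\<close>

lemma spanned_Hom_vanishing: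
  assumes U: "rational_filtration s1 e1 f1 h1 n U" "\<And>i. i < n \<Longrightarrow> M1.rational_cover (U i) (U (Suc i))"
    and V: "rational_filtration s2 e2 f2 h2 m V" "\<And>j. j < m \<Longrightarrow> M2.rational_cover (V j) (V (Suc j))"
    and "i \<le> n"
  shows "spanned_by_le (fun_scale s2) ((n - i) * m) {\<phi> \<in> Hom. \<forall>x\<in>U i. \<phi> x = 0}"
  using \<open>i \<le> n\<close>
proof (induction i rule: inc_induct)
  case base
  have "{\<phi> \<in> Hom. \<forall>x\<in>U n. \<phi> x = 0} = {0}"
    using U(1) FV.subspace_0[OF Hom_subspace] by (auto simp: rational_filtration_def fun_eq_iff)
  then show ?case by (simp add: FV.spanned_by_le_zero)
next
  case (step i)
  let ?H = "\<lambda>j. Hom_layer (U i) (U (Suc i)) (V j)"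
  have "U i \<subseteq> U (Suc i)" using U(1) step.hyps by (auto simp: rational_filtration_def)
  with V(1) have H0: "?H 0 = {\<phi> \<in> Hom. \<forall>x\<in>U (Suc i). \<phi> x = 0}"
    by (auto simp: Hom_layer_def rational_filtration_def)
  have "?H m = {\<phi> \<in> Hom. \<forall>x\<in>U i. \<phi> x = 0}"
    using V(1) by (auto simp: Hom_layer_def rational_filtration_def)
  moreover have "spanned_by_le (fun_scale s2) ((n - Suc i) * m + m) (?H m)"
  proof (rule FV.spanned_by_le_chain)
    show "FV.subspace (?H j)" if "j \<le> m" for j
      using V(1) that by (intro Hom_layer_subspace) (simp add: rational_filtration_def rational_submodule_def)
    show "?H j \<subseteq> ?H (Suc j)" if "j < m" for j
    proof -
      have "V j \<subseteq> V (Suc j)" using V(1) that by (auto simp: rational_filtration_def)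
      then show ?thesis by (auto simp: Hom_layer_def)
    qed
    show "spanned_by_le (fun_scale s2) ((n - Suc i) * m) (?H 0)"
      using step.IH H0 by simp
    show "\<exists>c d. (c \<noteq> 0 \<or> d \<noteq> 0) \<and> fun_scale s2 c \<phi> + fun_scale s2 d \<psi> \<in> ?H j"
      if "j < m" "\<phi> \<in> ?H (Suc j)" "\<psi> \<in> ?H (Suc j)" for j \<phi> \<psi>
      using Hom_layer_codim_le_one[OF U(2)[OF step.hyps(2)] V(2)[OF that(1)] that(2,3)] .
  qed
  moreover have "(n - Suc i) * m + m = (n - i) * m"
    using Suc_diff_Suc[OF step.hyps(2)] by (metis add.commute mult_Suc)
  ultimately show ?case by simp
qed

lemma spanned_Hom:
  "spanned_by_le (fun_scale s2) (rational_length s1 e1 f1 h1 * rational_length s2 e2 f2 h2) Hom"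
proof -
  obtain U where U: "rational_filtration s1 e1 f1 h1 (rational_length s1 e1 f1 h1) U"
    using M1.rational_length_filtration by blast
  obtain V where V: "rational_filtration s2 e2 f2 h2 (rational_length s2 e2 f2 h2) V"
    using M2.rational_length_filtration by blast
  have "{\<phi> \<in> Hom. \<forall>x\<in>U 0. \<phi> x = 0} = Hom"
    using U by (auto simp: rational_filtration_def hom_zero)
  with spanned_Hom_vanishing[OF U M1.longest_filtration_covers[OF U] V M2.longest_filtration_covers[OF V], of 0]
  show ?thesis by simp
qed

end

theorem theorem6p20:
  fixes s1 :: "complex \<Rightarrow> 'v::ab_group_add \<Rightarrow> 'v" and e1 f1 h1 :: "'v \<Rightarrow> 'v"
    and s2 :: "complex \<Rightarrow> 'w::ab_group_add \<Rightarrow> 'w" and e2 f2 h2 :: "'w \<Rightarrow> 'w"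
  assumes "rational_sl2_module s1 e1 f1 h1"
    and "rational_sl2_module s2 e2 f2 h2"
  shows "vector_space.dim (fun_scale s2) (sl2_hom s1 e1 f1 h1 s2 e2 f2 h2)
           \<le> rational_length s1 e1 f1 h1 * rational_length s2 e2 f2 h2
         \<and> (\<exists>B. finite B \<and> B \<subseteq> sl2_hom s1 e1 f1 h1 s2 e2 f2 h2 \<and>
               module.span (fun_scale s2) B = sl2_hom s1 e1 f1 h1 s2 e2 f2 h2)"
proof -
  interpret rational_pair s1 e1 f1 h1 s2 e2 f2 h2
    using assms by (intro rational_pair.intro rational_module.intro)
  obtain B where B: "finite B" "card B \<le> rational_length s1 e1 f1 h1 * rational_length s2 e2 f2 h2"
    "FV.span B = Hom"
    using spanned_Hom unfolding spanned_by_le_def by blast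
  then have "FV.dim Hom \<le> card B" by (intro FV.dim_le_card) auto
  with B show ?thesis using FV.span_superset by auto
qed

end
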